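(* Let $\Gamma$ be a graph with $N$ edges. Then $\mathcal{T}(\Gamma)$ equals the set of $(\mathbf{z},\mathbf{x})\in\mathbb{T}^N\times\mathbb{C}^{4N}$, $\mathbf{x}=(A_j,B_j,C_j,D_j)_{j=1}^N$, satisfying: (1) the vertex conditions $P_{\mathrm{std}}\mathbf{x}=0$; and (2) for every edge $e_j$, $A_j+iB_j-z_j(C_j-iD_j)=0$ and $C_j+iD_j-z_j(A_j-iB_j)=0$. In particular $\mathcal{T}(\Gamma)$ is an algebraic subvariety of $\mathbb{T}^N\times\mathbb{C}^{4N}$. Moreover, for each $\mathbf{z}\in\Sigma(\Gamma)$ the fiber $\mathcal{T}_{\mathbf{z}}(\Gamma)=\{\mathbf{x}\in\mathbb{C}^{4N}:(\mathbf{z},\mathbf{x})\in\mathcal{T}(\Gamma)\}$ is a complex linear subspace of $\mathbb{C}^{4N}$ having a basis of real vectors.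
   Context: $\Gamma$ is a finite graph with edges $e_1,\dots,e_N$, each oriented from $o(e_j)$ to $\tau(e_j)$. For $\boldsymbol{\ell}\in\mathbb{R}_+^N$, $(\Gamma,\boldsymbol{\ell})$ has $e_j\cong[0,\ell_j]$ and the Laplacian $-d^2/dt^2$ edgewise with standard vertex conditions (continuity at each vertex, and $\sum_{o(e_j)=v}f'|_{e_j}(0)-\sum_{\tau(e_j)=v}f'|_{e_j}(\ell_j)=0$). $\mathrm{spec}(\Gamma,\boldsymbol{\ell})$ is the set of $k\ge0$ with $k^2$ an eigenvalue and $\mathrm{Eig}(\Gamma,\boldsymbol{\ell},k)$ the eigenspace (including $0$). For an eigenfunction with $k>0$: $f|_{e_j}(t)=A_j\cos(kt)+B_j\sin(kt)=C_j\cos(k(\ell_j-t))+D_j\sin(k(\ell_j-t))$ and $\mathrm{tr}_k(f)\in\mathbb{C}^{4N}$ collects all $A_j,B_j,C_j,D_j$ ($A_j,C_j$ are the endpoint values, $B_j=f'|_{e_j}(0)/k$, $D_j=-f'|_{e_j}(\ell_j)/k$); for $k=0$, $f\equiv c$ has $A_j=C_j=c$, $B_j=D_j=0$. $\mathbb{T}^N=\{\mathbf{z}\in\mathbb{C}^N:|z_j|=1\}$, $\exp(ik\boldsymbol{\ell})=(e^{ik\ell_j})_j$. Trace space $\mathcal{T}(\Gamma)=\{(\exp(ik\boldsymbol{\ell}),\mathrm{tr}_k(f)):\boldsymbol{\ell}\in\mathbb{R}_+^N,k\in\mathrm{spec}(\Gamma,\boldsymbol{\ell}),f\in\mathrm{Eig}(\Gamma,\boldsymbol{\ell},k)\}$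 and $\Sigma(\Gamma)$ its projection to $\mathbb{T}^N$. $P_{\mathrm{std}}$ is the $2N\times4N$ real matrix of rank $2N$ expressing the standard vertex conditions on trace vectors: at each vertex $v$, all $A_j$ with $o(e_j)=v$ and $C_j$ with $\tau(e_j)=v$ are equal, and $\sum_{o(e_j)=v}B_j+\sum_{\tau(e_j)=v}D_j=0$. *)

theory Defs
  imports "HOL-Analysis.Analysis"
begin

text \<open>A finite graph: edges form a finite type 'e (so N = CARD('e)); each edge e
  is oriented from org e to trm e (vertices of an arbitrary type 'v). Loops and
  multiple edges are allowed.\<close>

text \<open>Coordinates of a trace vector: for each edge j the four numbers A_j, B_j, C_j, D_j.
  A trace vector in C^(4N) is thus an element of complex ^ ('e \<times> coord).\<close>
datatype coord = cA | cB | cC | cD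

lemma UNIV_coord: "(UNIV :: coord set) = {cA, cB, cC, cD}"
  using coord.exhaust by auto

instance coord :: finite
  by standard (simp add: UNIV_coord)

abbreviation edge_ivl :: "(real ^ 'e) \<Rightarrow> 'e \<Rightarrow> real set" where
  "edge_ivl L j \<equiv> {0 .. L $ j}"

definition edge_deriv :: "(real ^ 'e) \<Rightarrow> ('e \<Rightarrow> real \<Rightarrow> complex) \<Rightarrow> 'e \<Rightarrow> real \<Rightarrow> complex" where
  "edge_deriv L f j t = vector_derivative (f j) (at t within edge_ivl L j)"

text \<open>Eigenspace Eig(Gamma, l, k) (including 0): functions f (f j is the restriction to
  edge e_j = [0, l_j]) which on each edge solve -f'' = k^2 f (classically, on the
  closed interval) and satisfy the standard (Neumann-Kirchhoff) vertex conditions.\<close>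
definition Eig :: "('e::finite \<Rightarrow> 'v) \<Rightarrow> ('e \<Rightarrow> 'v) \<Rightarrow> real ^ 'e \<Rightarrow> real
                   \<Rightarrow> ('e \<Rightarrow> real \<Rightarrow> complex) set" where
  "Eig org trm L k = {f.
     (\<forall>j. \<forall>t \<in> edge_ivl L j.
        f j differentiable (at t within edge_ivl L j) \<and>
        (edge_deriv L f j has_vector_derivative (- complex_of_real (k\<^sup>2) * f j t))
           (at t within edge_ivl L j)) \<and>
     (\<forall>j j'. org j = org j' \<longrightarrow> f j 0 = f j' 0) \<and>
     (\<forall>j j'. org j = trm j' \<longrightarrow> f j 0 = f j' (L $ j')) \<and>
     (\<forall>j j'. trm j = trm j' \<longrightarrow> f j (L $ j) = f j' (L $ j')) \<and>
     (\<forall>v. (\<Sum>j \<in> {j. org j = v}. edge_deriv L f j 0)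
          - (\<Sum>j \<in> {j. trm j = v}. edge_deriv L f j (L $ j)) = 0)}"

definition spec :: "('e::finite \<Rightarrow> 'v) \<Rightarrow> ('e \<Rightarrow> 'v) \<Rightarrow> real ^ 'e \<Rightarrow> real set" where
  "spec org trm L = {k. k \<ge> 0 \<and>
     (\<exists>f \<in> Eig org trm L k. \<exists>j. \<exists>t \<in> edge_ivl L j. f j t \<noteq> 0)}"

text \<open>tr_k(f): A_j = f_j(0), B_j = f_j'(0)/k, C_j = f_j(l_j), D_j = - f_j'(l_j)/k.
  For k = 0 we set B_j = D_j = 0 (as in the paper, where f is constant).\<close>
definition trace_vec :: "real ^ 'e \<Rightarrow> real \<Rightarrow> ('e \<Rightarrow> real \<Rightarrow> complex) \<Rightarrow> complex ^ ('e \<times> coord)" where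
  "trace_vec L k f = (\<chi> p. (case snd p of
       cA \<Rightarrow> f (fst p) 0
     | cB \<Rightarrow> (if k = 0 then 0 else edge_deriv L f (fst p) 0 / complex_of_real k)
     | cC \<Rightarrow> f (fst p) (L $ fst p)
     | cD \<Rightarrow> (if k = 0 then 0 else - edge_deriv L f (fst p) (L $ fst p) / complex_of_real k)))"

definition expkl :: "real \<Rightarrow> real ^ 'e \<Rightarrow> complex ^ 'e" where
  "expkl k L = (\<chi> j. exp (\<i> * complex_of_real (k * L $ j)))"

definition trace_space :: "('e::finite \<Rightarrow> 'v) \<Rightarrow> ('e \<Rightarrow> 'v)
                           \<Rightarrow> ((complex ^ 'e) \<times> (complex ^ ('e \<times> coord))) set" where
  "trace_space org trm = {(expkl k L, trace_vec L k f) | L k f.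
      (\<forall>j. L $ j > 0) \<and> k \<in> spec org trm L \<and> f \<in> Eig org trm L k}"

definition Sigma_set :: "('e::finite \<Rightarrow> 'v) \<Rightarrow> ('e \<Rightarrow> 'v) \<Rightarrow> (complex ^ 'e) set" where
  "Sigma_set org trm = fst ` trace_space org trm"

definition torus :: "(complex ^ 'e) set" where
  "torus = {z. \<forall>j. norm (z $ j) = 1}"

definition std_vertex_cond :: "('e::finite \<Rightarrow> 'v) \<Rightarrow> ('e \<Rightarrow> 'v) \<Rightarrow> complex ^ ('e \<times> coord) \<Rightarrow> bool" where
  "std_vertex_cond org trm x \<longleftrightarrow>
     (\<forall>j j'. org j = org j' \<longrightarrow> x $ (j, cA) = x $ (j', cA)) \<and>
     (\<forall>j j'. org j = trm j' \<longrightarrow> x $ (j, cA) = x $ (j', cC)) \<and>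
     (\<forall>j j'. trm j = trm j' \<longrightarrow> x $ (j, cC) = x $ (j', cC)) \<and>
     (\<forall>v. (\<Sum>j \<in> {j. org j = v}. x $ (j, cB)) + (\<Sum>j \<in> {j. trm j = v}. x $ (j, cD)) = 0)"

definition edge_cond :: "complex ^ 'e \<Rightarrow> complex ^ ('e \<times> coord) \<Rightarrow> bool" where
  "edge_cond z x \<longleftrightarrow> (\<forall>j.
     x $ (j, cA) + \<i> * x $ (j, cB) - z $ j * (x $ (j, cC) - \<i> * x $ (j, cD)) = 0 \<and>
     x $ (j, cC) + \<i> * x $ (j, cD) - z $ j * (x $ (j, cA) - \<i> * x $ (j, cB)) = 0)"

definition real_vec :: "complex ^ 'n \<Rightarrow> bool" where
  "real_vec x \<longleftrightarrow> (\<forall>i. x $ i \<in> \<real>)"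

end

theory Submission
  imports Defs
begin

(* For k > 0 the eigenfunction on an edge is f(t) = A cos kt + B sin kt, and both
   exp(ikt) (f + i f'/k) and exp(-ikt) (f - i f'/k) are constant along the edge; comparing
   their values at t = 0 and t = l_j gives the two edge equations (2). Rewritten in terms of
   the trace, the standard vertex conditions on f are exactly P_std x = 0. For k = 0 an energy
   argument (summation by parts against Kirchhoff's law) shows that eigenfunctions are
   constant on every edge, so (2) holds with z = 1.
   Conversely, a solution (z, x) of (1) and (2) with x <> 0 is realised with k = 1: take
   l_j > 0 with exp(i l_j) = z_j and f_j(t) = A_j cos t + B_j sin t. Since spec only contains
   frequencies with a nonzero eigenfunction, the zero trace lies exactly over Sigma(Gamma).
   Each fiber is therefore the solution space of linear equations that, as |z_j| = 1, are
   invariant under complex conjugation, and so it is spanned by real vectors. *)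

lemma has_vector_derivative_exp_real_scaled:
  fixes c :: complex
  shows "((\<lambda>t::real. exp (c * of_real t)) has_vector_derivative c * exp (c * of_real t)) (at t within S)"
proof -
  have "((\<lambda>w. exp (c * w)) has_field_derivative c * exp (c * of_real t)) (at (of_real t))"
    by (auto intro!: derivative_eq_intros)
  from has_vector_derivative_real_field[OF this] show ?thesis
    by simp
qed

lemma helmholtz_first_integral:
  fixes g g' :: "real \<Rightarrow> complex" and \<omega> l :: real
  assumes "\<omega> \<noteq> 0" "l \<ge> 0"
    and g: "\<And>t. t \<in> {0..l} \<Longrightarrow> (g has_vector_derivative g' t) (at t within {0..l})"
    and g': "\<And>t. t \<in> {0..l} \<Longrightarrow> (g' has_vector_derivative - of_real (\<omega>\<^sup>2) * g t) (at t within {0..l})"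
  shows "exp (\<i> * of_real (\<omega> * l)) * (g l + \<i> * g' l / of_real \<omega>) = g 0 + \<i> * g' 0 / of_real \<omega>"
proof -
  define P where "P t = exp ((\<i> * of_real \<omega>) * of_real t) * (g t + \<i> * g' t / of_real \<omega>)" for t
  have "(P has_vector_derivative 0) (at t within {0..l})" if t: "t \<in> {0..l}" for t
  proof -
    have "(P has_vector_derivative
        exp ((\<i> * of_real \<omega>) * of_real t) * (g' t + \<i> * (- of_real (\<omega>\<^sup>2) * g t) / of_real \<omega>)
        + (\<i> * of_real \<omega>) * exp ((\<i> * of_real \<omega>) * of_real t) * (g t + \<i> * g' t / of_real \<omega>))
        (at t within {0..l})"
      unfolding P_def
      by (intro has_vector_derivative_mult has_vector_derivative_exp_real_scaled
          has_vector_derivative_add has_vector_derivative_mult_right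
          has_vector_derivative_divide g g' t)
    then show ?thesis
      using \<open>\<omega> \<noteq> 0\<close> by (simp add: field_simps power2_eq_square)
  qed
  then obtain c where "\<And>t. t \<in> {0..l} \<Longrightarrow> P t = c"
    using has_vector_derivative_zero_constant[of "{0..l}" P] by auto
  then have "P l = P 0"
    using \<open>l \<ge> 0\<close> by auto
  then show ?thesis
    by (simp add: P_def mult.assoc)
qed

lemma affine_solution_zero_second_derivative:
  fixes g g' :: "real \<Rightarrow> complex" and l :: real
  assumes "l \<ge> 0"
    and g: "\<And>t. t \<in> {0..l} \<Longrightarrow> (g has_vector_derivative g' t) (at t within {0..l})"
    and g': "\<And>t. t \<in> {0..l} \<Longrightarrow> (g' has_vector_derivative 0) (at t within {0..l})"
  shows "g' l = g' 0" and "g l = g 0 + of_real l * g' 0"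
proof -
  obtain c where c: "\<And>t. t \<in> {0..l} \<Longrightarrow> g' t = c"
    using has_vector_derivative_zero_constant[of "{0..l}" g'] g' by auto
  then show "g' l = g' 0"
    using \<open>l \<ge> 0\<close> by auto
  have "((\<lambda>t. g t - of_real t * c) has_vector_derivative 0) (at t within {0..l})"
    if t: "t \<in> {0..l}" for t
  proof -
    have "((\<lambda>t. g t - of_real t * c) has_vector_derivative g' t - 1 * c) (at t within {0..l})"
      by (intro has_vector_derivative_diff g t has_vector_derivative_mult_left
          has_vector_derivative_of_real) (auto intro!: derivative_eq_intros)
    then show ?thesis
      by (simp add: c[OF t])
  qed
  then obtain d where "\<And>t. t \<in> {0..l} \<Longrightarrow> g t - of_real t * c = d"
    using has_vector_derivative_zero_constant[of "{0..l}" "\<lambda>t. g t - of_real t * c"] by auto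
  from this[of 0] this[of l] c[of 0] \<open>l \<ge> 0\<close> show "g l = g 0 + of_real l * g' 0"
    by (auto simp: algebra_simps)
qed

definition agree_at_vertices :: "('e \<Rightarrow> 'v) \<Rightarrow> ('e \<Rightarrow> 'v) \<Rightarrow> ('e \<Rightarrow> 'a) \<Rightarrow> ('e \<Rightarrow> 'a) \<Rightarrow> bool" where
  "agree_at_vertices org trm a c \<longleftrightarrow>
     (\<forall>j j'. org j = org j' \<longrightarrow> a j = a j') \<and>
     (\<forall>j j'. org j = trm j' \<longrightarrow> a j = c j') \<and>
     (\<forall>j j'. trm j = trm j' \<longrightarrow> c j = c j')"

lemma agree_at_vertices_iff_potential:
  "agree_at_vertices org trm a c \<longleftrightarrow> (\<exists>\<phi>. \<forall>j. a j = \<phi> (org j) \<and> c j = \<phi> (trm j))"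
proof
  assume "agree_at_vertices org trm a c"
  then have oo: "org j = org j' \<Longrightarrow> a j = a j'" and ot: "org j = trm j' \<Longrightarrow> a j = c j'"
    and tt: "trm j = trm j' \<Longrightarrow> c j = c j'" for j j'
    unfolding agree_at_vertices_def by blast+
  define \<phi> where "\<phi> v = (if \<exists>j. org j = v then a (SOME j. org j = v) else c (SOME j. trm j = v))" for v
  have "a j = \<phi> (org j) \<and> c j = \<phi> (trm j)" for j
  proof
    have "org (SOME j'. org j' = org j) = org j"
      by (rule someI) (rule refl)
    then show "a j = \<phi> (org j)"
      unfolding \<phi>_def using oo by metis
    show "c j = \<phi> (trm j)"
    proof (cases "\<exists>j'. org j' = trm j")
      case True
      then have "org (SOME j'. org j' = trm j) = trm j"
        by (rule someI_ex)
      then show ?thesis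
        unfolding \<phi>_def using True ot by metis
    next
      case False
      have "trm (SOME j'. trm j' = trm j) = trm j"
        by (rule someI) (rule refl)
      then show ?thesis
        unfolding \<phi>_def using False tt by metis
    qed
  qed
  then show "\<exists>\<phi>. \<forall>j. a j = \<phi> (org j) \<and> c j = \<phi> (trm j)"
    by blast
qed (unfold agree_at_vertices_def, metis)

lemma agree_at_vertices_combine:
  assumes "agree_at_vertices org trm a c" "agree_at_vertices org trm a' c'"
  shows "agree_at_vertices org trm (\<lambda>j. h (a j) (a' j)) (\<lambda>j. h (c j) (c' j))"
  using assms unfolding agree_at_vertices_def by metis

lemma sum_group_by_image:
  fixes p :: "'e::finite \<Rightarrow> 'v" and w :: "'e \<Rightarrow> 'a::comm_semiring_0"
  assumes "finite V" "range p \<subseteq> V"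
  shows "(\<Sum>j\<in>UNIV. \<phi> (p j) * w j) = (\<Sum>v\<in>V. \<phi> v * (\<Sum>j | p j = v. w j))"
proof -
  have "(\<Sum>j\<in>UNIV. \<phi> (p j) * w j) = (\<Sum>v\<in>V. \<Sum>j | p j = v. \<phi> (p j) * w j)"
    using sum.group[of UNIV V p "\<lambda>j. \<phi> (p j) * w j"] assms by simp
  also have "\<dots> = (\<Sum>v\<in>V. \<phi> v * (\<Sum>j | p j = v. w j))"
    by (auto simp: sum_distrib_left intro!: sum.cong)
  finally show ?thesis .
qed

text \<open>Summation by parts on a graph: the sum equals
  sum_v phi(v) (inflow of w at v - outflow of w at v).\<close>
lemma conserved_flow_potential_sum:
  fixes org trm :: "'e::finite \<Rightarrow> 'v" and w :: "'e \<Rightarrow> 'a::comm_ring"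
  assumes "\<And>v. (\<Sum>j | org j = v. w j) = (\<Sum>j | trm j = v. w j)"
  shows "(\<Sum>j\<in>UNIV. (\<phi> (trm j) - \<phi> (org j)) * w j) = 0"
proof -
  define V where "V = range org \<union> range trm"
  have "finite V"
    by (simp add: V_def)
  have "(\<Sum>j\<in>UNIV. (\<phi> (trm j) - \<phi> (org j)) * w j)
      = (\<Sum>j\<in>UNIV. \<phi> (trm j) * w j) - (\<Sum>j\<in>UNIV. \<phi> (org j) * w j)"
    by (simp add: left_diff_distrib sum_subtractf)
  also have "\<dots> = (\<Sum>v\<in>V. \<phi> v * ((\<Sum>j | trm j = v. w j) - (\<Sum>j | org j = v. w j)))"
    using sum_group_by_image[OF \<open>finite V\<close>, of trm \<phi> w] sum_group_by_image[OF \<open>finite V\<close>, of org \<phi> w]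
    by (simp add: V_def right_diff_distrib sum_subtractf)
  also have "\<dots> = 0"
    using assms by simp
  finally show ?thesis .
qed

definition edgewise_helmholtz :: "real ^ 'e \<Rightarrow> real \<Rightarrow> ('e \<Rightarrow> real \<Rightarrow> complex) \<Rightarrow> bool" where
  "edgewise_helmholtz L k f \<longleftrightarrow> (\<forall>j. \<forall>t \<in> edge_ivl L j.
     f j differentiable (at t within edge_ivl L j) \<and>
     (edge_deriv L f j has_vector_derivative (- complex_of_real (k\<^sup>2) * f j t)) (at t within edge_ivl L j))"

lemma Eig_iff:
  "f \<in> Eig org trm L k \<longleftrightarrow>
     edgewise_helmholtz L k f \<and> agree_at_vertices org trm (\<lambda>j. f j 0) (\<lambda>j. f j (L $ j)) \<and>
     (\<forall>v. (\<Sum>j | org j = v. edge_deriv L f j 0) = (\<Sum>j | trm j = v. edge_deriv L f j (L $ j)))"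
  unfolding Eig_def edgewise_helmholtz_def agree_at_vertices_def
  by (simp only: mem_Collect_eq conj_assoc right_minus_eq)

lemma edgewise_helmholtzD:
  assumes "edgewise_helmholtz L k f" "t \<in> {0..L $ j}"
  shows "(f j has_vector_derivative edge_deriv L f j t) (at t within {0..L $ j})"
    and "(edge_deriv L f j has_vector_derivative - of_real (k\<^sup>2) * f j t) (at t within {0..L $ j})"
  using assms unfolding edgewise_helmholtz_def
  by (auto simp: edge_deriv_def vector_derivative_works[symmetric])

lemma trace_vec_component [simp]:
  "trace_vec L k f $ (j, cA) = f j 0"
  "trace_vec L k f $ (j, cB) = (if k = 0 then 0 else edge_deriv L f j 0 / of_real k)"
  "trace_vec L k f $ (j, cC) = f j (L $ j)"
  "trace_vec L k f $ (j, cD) = (if k = 0 then 0 else - edge_deriv L f j (L $ j) / of_real k)"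
  by (simp_all add: trace_vec_def)

lemma std_vertex_cond_iff:
  "std_vertex_cond org trm x \<longleftrightarrow>
     agree_at_vertices org trm (\<lambda>j. x $ (j, cA)) (\<lambda>j. x $ (j, cC)) \<and>
     (\<forall>v. (\<Sum>j | org j = v. x $ (j, cB)) + (\<Sum>j | trm j = v. x $ (j, cD)) = 0)"
  unfolding std_vertex_cond_def agree_at_vertices_def by (simp only: conj_assoc)

lemma std_vertex_cond_trace_vec_iff:
  assumes "k \<noteq> 0"
  shows "std_vertex_cond org trm (trace_vec L k f) \<longleftrightarrow>
     agree_at_vertices org trm (\<lambda>j. f j 0) (\<lambda>j. f j (L $ j)) \<and>
     (\<forall>v. (\<Sum>j | org j = v. edge_deriv L f j 0) = (\<Sum>j | trm j = v. edge_deriv L f j (L $ j)))"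
proof -
  have "(\<Sum>j | org j = v. edge_deriv L f j 0 / of_real k) + (\<Sum>j | trm j = v. - edge_deriv L f j (L $ j) / of_real k)
      = ((\<Sum>j | org j = v. edge_deriv L f j 0) - (\<Sum>j | trm j = v. edge_deriv L f j (L $ j))) / of_real k" for v
    by (simp add: sum_divide_distrib sum_negf diff_divide_distrib)
  then show ?thesis
    using assms by (simp add: std_vertex_cond_iff)
qed

lemma Eig_iff_trace_vec:
  assumes "k \<noteq> 0"
  shows "f \<in> Eig org trm L k \<longleftrightarrow> edgewise_helmholtz L k f \<and> std_vertex_cond org trm (trace_vec L k f)"
  using assms by (simp add: Eig_iff std_vertex_cond_trace_vec_iff)

text \<open>Energy argument: with b_j = f_j' (constant on the edge) and vertex values phi, Kirchhoff's law gives
  0 = sum_j (phi(trm j) - phi(org j)) cnj(b_j) = sum_j L_j |b_j|^2.\<close>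
lemma Eig_zero_edge_constant:
  assumes L: "\<forall>j. L $ j > 0" and f: "f \<in> Eig org trm L 0"
  shows "f j (L $ j) = f j 0"
proof -
  define b where "b j = edge_deriv L f j 0" for j
  from f have helm: "edgewise_helmholtz L 0 f"
    and agree: "agree_at_vertices org trm (\<lambda>j. f j 0) (\<lambda>j. f j (L $ j))"
    and kirchhoff: "\<And>v. (\<Sum>j | org j = v. b j) = (\<Sum>j | trm j = v. edge_deriv L f j (L $ j))"
    by (simp_all add: Eig_iff b_def)
  have slope: "edge_deriv L f j (L $ j) = b j" and affine: "f j (L $ j) = f j 0 + of_real (L $ j) * b j" for j
    using affine_solution_zero_second_derivative[of "L $ j" "f j" "edge_deriv L f j"]
      edgewise_helmholtzD[OF helm] L by (auto simp: b_def less_imp_le)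
  obtain \<phi> where \<phi>: "\<And>j. f j 0 = \<phi> (org j)" "\<And>j. f j (L $ j) = \<phi> (trm j)"
    using agree unfolding agree_at_vertices_iff_potential by blast
  have "(\<Sum>j | org j = v. cnj (b j)) = (\<Sum>j | trm j = v. cnj (b j))" for v
    using arg_cong[OF kirchhoff[of v], of cnj] by (simp add: slope)
  then have "(\<Sum>j\<in>UNIV. (\<phi> (trm j) - \<phi> (org j)) * cnj (b j)) = 0"
    by (rule conserved_flow_potential_sum)
  moreover have "(\<phi> (trm j) - \<phi> (org j)) * cnj (b j) = of_real (L $ j * (cmod (b j))\<^sup>2)" for j
  proof -
    have "(\<phi> (trm j) - \<phi> (org j)) * cnj (b j) = of_real (L $ j) * (b j * cnj (b j))"
      using affine[of j] \<phi>[of j] by (simp add: algebra_simps)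
    then show ?thesis
      by (simp only: complex_norm_square of_real_mult)
  qed
  ultimately have "of_real (\<Sum>j\<in>UNIV. L $ j * (cmod (b j))\<^sup>2) = (0 :: complex)"
    by (simp only: of_real_sum)
  then have "(\<Sum>j\<in>UNIV. L $ j * (cmod (b j))\<^sup>2) = 0"
    by (simp only: of_real_eq_0_iff)
  then have "L $ j * (cmod (b j))\<^sup>2 = 0"
    using sum_nonneg_eq_0_iff[of UNIV "\<lambda>j. L $ j * (cmod (b j))\<^sup>2"] L
    by (simp add: less_imp_le)
  then show ?thesis
    using affine[of j] L by simp
qed

lemma std_vertex_cond_trace_vec:
  assumes "f \<in> Eig org trm L k"
  shows "std_vertex_cond org trm (trace_vec L k f)"
proof (cases "k = 0")
  case True
  then show ?thesis
    using assms by (simp add: Eig_iff std_vertex_cond_iff)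
next
  case False
  then show ?thesis
    using assms by (simp add: Eig_iff_trace_vec)
qed

lemma expkl_in_torus: "expkl k L \<in> torus"
  by (simp add: torus_def expkl_def norm_exp_eq_Re)

lemma edge_cond_trace_vec:
  assumes L: "\<forall>j. L $ j > 0" and "k \<ge> 0" and f: "f \<in> Eig org trm L k"
  shows "edge_cond (expkl k L) (trace_vec L k f)"
proof (cases "k = 0")
  case True
  then show ?thesis
    using Eig_zero_edge_constant[OF L f[unfolded True]] by (simp add: edge_cond_def expkl_def)
next
  case False
  have helm: "edgewise_helmholtz L k f"
    using f by (simp add: Eig_iff)
  have "f j 0 + \<i> * edge_deriv L f j 0 / of_real \<omega>
      = exp (\<i> * of_real (\<omega> * L $ j)) * (f j (L $ j) + \<i> * edge_deriv L f j (L $ j) / of_real \<omega>)"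
    if "\<omega> = k \<or> \<omega> = - k" for \<omega> j
    using helmholtz_first_integral[of \<omega> "L $ j" "f j" "edge_deriv L f j"] that False L
      edgewise_helmholtzD[OF helm] by (auto simp: less_imp_le)
  from this[of k] this[of "- k"] show ?thesis
    unfolding edge_cond_def expkl_def by (simp add: False exp_minus_inverse)
qed

lemma unit_complex_eq_exp_positive_angle:
  assumes "norm w = 1"
  obtains \<theta> :: real where "\<theta> > 0" "exp (\<i> * of_real \<theta>) = w"
proof
  show "Arg w + 2 * pi > 0"
    using Arg_bounded[of w] by linarith
  have "w \<noteq> 0"
    using assms by auto
  then have "w = exp (\<i> * of_real (Arg w))"
    using Arg_eq[of w] assms by simp
  then show "exp (\<i> * of_real (Arg w + 2 * pi)) = w"
    by (simp add: algebra_simps exp_add)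
qed

lemma torus_eq_expkl_positive:
  assumes "z \<in> torus"
  obtains L :: "real ^ 'e" where "\<forall>j. L $ j > 0" "expkl 1 L = z"
proof -
  have "\<exists>\<theta>. \<theta> > 0 \<and> exp (\<i> * of_real \<theta>) = z $ j" for j
  proof -
    have "norm (z $ j) = 1"
      using assms by (simp add: torus_def)
    then obtain \<theta> where "\<theta> > 0" "exp (\<i> * of_real \<theta>) = z $ j"
      by (rule unit_complex_eq_exp_positive_angle)
    then show ?thesis
      by blast
  qed
  then obtain \<theta> where "\<And>j. \<theta> j > 0" "\<And>j. exp (\<i> * of_real (\<theta> j)) = z $ j"
    using choice[of "\<lambda>j \<theta>. \<theta> > 0 \<and> exp (\<i> * of_real \<theta>) = z $ j"] by blast
  then show ?thesis
    using that[of "\<chi> j. \<theta> j"] by (simp add: expkl_def vec_eq_iff)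
qed

definition trig_comb :: "complex \<Rightarrow> complex \<Rightarrow> real \<Rightarrow> complex" where
  "trig_comb a b t = a * of_real (cos t) + b * of_real (sin t)"

lemma has_vector_derivative_trig_comb:
  "(trig_comb a b has_vector_derivative trig_comb b (- a) t) (at t within S)"
proof -
  have "(trig_comb a b has_vector_derivative a * of_real (- sin t) + b * of_real (cos t)) (at t within S)"
    unfolding trig_comb_def
    by (intro has_vector_derivative_add has_vector_derivative_mult_right has_vector_derivative_of_real)
      (auto intro!: derivative_eq_intros)
  then show ?thesis
    by (simp add: trig_comb_def algebra_simps)
qed

lemma trig_comb_nonzero_on_interval:
  assumes "l > 0" "a \<noteq> 0 \<or> b \<noteq> 0"
  shows "\<exists>t \<in> {0..l}. trig_comb a b t \<noteq> 0"
proof (cases "a = 0")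
  case True
  have "sin (min l 1) > 0"
    using \<open>l > 0\<close> pi_gt3 by (intro sin_gt_zero) auto
  then have "trig_comb a b (min l 1) \<noteq> 0"
    using True assms(2) by (simp add: trig_comb_def)
  then show ?thesis
    using \<open>l > 0\<close> by (intro bexI[of _ "min l 1"]) auto
next
  case False
  then show ?thesis
    using \<open>l > 0\<close> by (intro bexI[of _ 0]) (auto simp: trig_comb_def)
qed

lemma edge_cond_rotation:
  assumes "edge_cond z x" "z $ j = exp (\<i> * of_real \<theta>)"
  shows "x $ (j, cC) = trig_comb (x $ (j, cA)) (x $ (j, cB)) \<theta>"
    and "x $ (j, cD) = - trig_comb (x $ (j, cB)) (- x $ (j, cA)) \<theta>"
proof -
  have z: "z $ j = of_real (cos \<theta>) + \<i> * of_real (sin \<theta>)"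
    using assms(2) by (simp add: exp_Euler cos_of_real sin_of_real)
  have pyth: "(of_real (cos \<theta>))\<^sup>2 + (of_real (sin \<theta>))\<^sup>2 = (1 :: complex)"
    by (metis of_real_add of_real_power sin_cos_squared_add2 of_real_1)
  have "x $ (j, cA) + \<i> * x $ (j, cB) - z $ j * (x $ (j, cC) - \<i> * x $ (j, cD)) = 0"
    "x $ (j, cC) + \<i> * x $ (j, cD) - z $ j * (x $ (j, cA) - \<i> * x $ (j, cB)) = 0"
    using assms(1) unfolding edge_cond_def by blast+
  moreover have "\<i> * \<i> = (-1 :: complex)"
    by simp
  ultimately have "x $ (j, cC) = trig_comb (x $ (j, cA)) (x $ (j, cB)) \<theta> \<and>
      x $ (j, cD) = - trig_comb (x $ (j, cB)) (- x $ (j, cA)) \<theta>"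
    using pyth unfolding z trig_comb_def by algebra
  then show "x $ (j, cC) = trig_comb (x $ (j, cA)) (x $ (j, cB)) \<theta>"
    and "x $ (j, cD) = - trig_comb (x $ (j, cB)) (- x $ (j, cA)) \<theta>"
    by simp_all
qed

lemma trig_comb_edgewise_helmholtz:
  fixes a b :: "'e::finite \<Rightarrow> complex"
  assumes L: "\<forall>j. L $ j > 0"
  defines "f \<equiv> \<lambda>j. trig_comb (a j) (b j)"
  shows "edgewise_helmholtz L 1 f"
    and "\<And>j t. t \<in> {0..L $ j} \<Longrightarrow> edge_deriv L f j t = trig_comb (b j) (- a j) t"
proof -
  show deriv: "edge_deriv L f j t = trig_comb (b j) (- a j) t" if "t \<in> {0..L $ j}" for j t
    unfolding edge_deriv_def f_def
    by (rule vector_derivative_within_closed_interval)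
      (use L that in \<open>auto intro: has_vector_derivative_trig_comb\<close>)
  show "edgewise_helmholtz L 1 f"
    unfolding edgewise_helmholtz_def
  proof (intro allI ballI conjI)
    fix j t assume t: "t \<in> edge_ivl L j"
    show "f j differentiable at t within edge_ivl L j"
      unfolding f_def by (rule differentiableI_vector) (rule has_vector_derivative_trig_comb)
    have "(trig_comb (b j) (- a j) has_vector_derivative - of_real (1\<^sup>2) * f j t) (at t within edge_ivl L j)"
      using has_vector_derivative_trig_comb[of "b j" "- a j"] by (simp add: f_def trig_comb_def)
    with t deriv show "(edge_deriv L f j has_vector_derivative - of_real (1\<^sup>2) * f j t) (at t within edge_ivl L j)"
      by (rule has_vector_derivative_transform)
  qed
qed

lemma nonzero_in_trace_space:
  fixes org trm :: "'e::finite \<Rightarrow> 'v"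
  assumes z: "z \<in> torus" and std: "std_vertex_cond org trm x" and edge: "edge_cond z x"
    and "x \<noteq> 0"
  shows "(z, x) \<in> trace_space org trm"
proof -
  obtain L where L: "\<forall>j. L $ j > 0" and "expkl 1 L = z"
    using z by (rule torus_eq_expkl_positive)
  then have z_exp: "z $ j = exp (\<i> * of_real (L $ j))" for j
    by (auto simp: expkl_def)
  define f where "f = (\<lambda>j. trig_comb (x $ (j, cA)) (x $ (j, cB)))"
  note helm = trig_comb_edgewise_helmholtz[OF L, where a = "\<lambda>j. x $ (j, cA)" and b = "\<lambda>j. x $ (j, cB)",
      folded f_def]
  have C: "x $ (j, cC) = trig_comb (x $ (j, cA)) (x $ (j, cB)) (L $ j)"
    and D: "x $ (j, cD) = - trig_comb (x $ (j, cB)) (- x $ (j, cA)) (L $ j)" for j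
    using edge_cond_rotation[OF edge z_exp] by simp_all
  have "trace_vec L 1 f $ (j, c) = x $ (j, c)" for j c
    using helm(2)[of 0 j] helm(2)[of "L $ j" j] L
    by (cases c) (auto simp: f_def C D trig_comb_def less_imp_le)
  then have trace: "trace_vec L 1 f = x"
    by (simp add: vec_eq_iff)
  then have eig: "f \<in> Eig org trm L 1"
    using helm(1) std by (simp add: Eig_iff_trace_vec)
  obtain j where "x $ (j, cA) \<noteq> 0 \<or> x $ (j, cB) \<noteq> 0"
  proof (rule ccontr)
    assume "\<not> thesis"
    with that have "x $ (j, cA) = 0" "x $ (j, cB) = 0" for j
      by blast+
    then have "x $ (j, c) = 0" for j c
      by (cases c) (simp_all add: C D trig_comb_def)
    then have "x = 0"
      by (simp add: vec_eq_iff split_paired_All)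
    with \<open>x \<noteq> 0\<close> show False ..
  qed
  then have "\<exists>t \<in> {0..L $ j}. f j t \<noteq> 0"
    using L trig_comb_nonzero_on_interval by (simp add: f_def)
  with eig have "1 \<in> spec org trm L"
    by (auto simp: spec_def)
  then show ?thesis
    using L eig trace \<open>expkl 1 L = z\<close> unfolding trace_space_def by blast
qed

lemma zero_in_Eig:
  assumes L: "\<forall>j. L $ j > 0"
  shows "(\<lambda>j t. 0) \<in> Eig org trm L k" and "trace_vec L k (\<lambda>j t. 0) = 0"
proof -
  have deriv: "edge_deriv L (\<lambda>j t. 0) j t = 0" if "t \<in> {0..L $ j}" for j t
    unfolding edge_deriv_def
    by (rule vector_derivative_within_closed_interval) (use L that in auto)
  then have ends: "edge_deriv L (\<lambda>j t. 0) j 0 = 0" "edge_deriv L (\<lambda>j t. 0) j (L $ j) = 0" for j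
    using L by (auto simp: less_imp_le)
  have "edgewise_helmholtz L k (\<lambda>j t. 0)"
    unfolding edgewise_helmholtz_def
    using deriv by (auto intro: has_vector_derivative_transform[OF _ _ has_vector_derivative_const])
  moreover have "agree_at_vertices org trm (\<lambda>j. 0) (\<lambda>j. 0)"
    by (simp add: agree_at_vertices_def)
  ultimately show "(\<lambda>j t. 0) \<in> Eig org trm L k"
    by (simp add: Eig_iff ends)
  show "trace_vec L k (\<lambda>j t. 0) = 0"
    by (simp add: vec_eq_iff trace_vec_def ends split: coord.split)
qed

lemma zero_in_trace_space:
  assumes "z \<in> Sigma_set org trm"
  shows "(z, 0) \<in> trace_space org trm"
proof -
  from assms obtain L k f where "z = expkl k L" "\<forall>j. L $ j > 0" "k \<in> spec org trm L"
    by (auto simp: Sigma_set_def trace_space_def)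
  with zero_in_Eig[of L] show ?thesis
    unfolding trace_space_def by fastforce
qed

lemma trace_space_eq:
  fixes org trm :: "'e::finite \<Rightarrow> 'v"
  shows "trace_space org trm =
           {(z, x). z \<in> torus \<and> std_vertex_cond org trm x \<and> edge_cond z x
                    \<and> (x \<noteq> 0 \<or> z \<in> Sigma_set org trm)}"
proof (intro equalityI subsetI)
  fix p assume p: "p \<in> trace_space org trm"
  then obtain L k f where "p = (expkl k L, trace_vec L k f)" "\<forall>j. L $ j > 0"
    "k \<ge> 0" "f \<in> Eig org trm L k"
    by (auto simp: trace_space_def spec_def)
  moreover have "fst p \<in> Sigma_set org trm"
    using p by (simp add: Sigma_set_def)
  ultimately show "p \<in> {(z, x). z \<in> torus \<and> std_vertex_cond org trm x \<and> edge_cond z x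
                    \<and> (x \<noteq> 0 \<or> z \<in> Sigma_set org trm)}"
    by (simp add: expkl_in_torus std_vertex_cond_trace_vec edge_cond_trace_vec)
next
  fix p assume "p \<in> {(z, x). z \<in> torus \<and> std_vertex_cond org trm x \<and> edge_cond z x
                    \<and> (x \<noteq> 0 \<or> z \<in> Sigma_set org trm)}"
  then show "p \<in> trace_space org trm"
    by (auto intro: nonzero_in_trace_space zero_in_trace_space)
qed

lemma std_vertex_cond_lincomb:
  assumes "std_vertex_cond org trm x" "std_vertex_cond org trm y"
  shows "std_vertex_cond org trm (a *s x + b *s y)"
proof -
  have "(\<Sum>j | org j = v. (a *s x + b *s y) $ (j, cB)) + (\<Sum>j | trm j = v. (a *s x + b *s y) $ (j, cD))
      = a * ((\<Sum>j | org j = v. x $ (j, cB)) + (\<Sum>j | trm j = v. x $ (j, cD)))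
        + b * ((\<Sum>j | org j = v. y $ (j, cB)) + (\<Sum>j | trm j = v. y $ (j, cD)))" for v
    by (simp add: sum.distrib sum_distrib_left algebra_simps)
  then show ?thesis
    using assms agree_at_vertices_combine[of org trm _ _ _ _ "\<lambda>u u'. a * u + b * u'"]
    unfolding std_vertex_cond_iff by simp
qed

lemma edge_cond_lincomb:
  assumes "edge_cond z x" "edge_cond z y"
  shows "edge_cond z (a *s x + b *s y)"
  unfolding edge_cond_def vector_add_component vector_smult_component
  apply (intro allI)
  subgoal for j
    using assms[unfolded edge_cond_def, THEN spec[of _ j]] by (elim conjE, intro conjI; algebra)
  done

lemma subspace_of_lincomb_closed:
  assumes "0 \<in> S" "\<And>a b x y. x \<in> S \<Longrightarrow> y \<in> S \<Longrightarrow> a *s x + b *s y \<in> S"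
  shows "vec.subspace S"
  unfolding vec.subspace_def
  using assms(1) assms(2)[of _ _ 1 1] assms(2)[of _ _ _ 0] by simp

lemma subspace_std_vertex_cond_edge_cond:
  "vec.subspace {x. std_vertex_cond org trm x \<and> edge_cond z x}"
proof (rule subspace_of_lincomb_closed)
  have "std_vertex_cond org trm 0" "edge_cond z 0"
    by (simp_all add: std_vertex_cond_def edge_cond_def)
  then show "0 \<in> {x. std_vertex_cond org trm x \<and> edge_cond z x}"
    by simp
qed (simp add: std_vertex_cond_lincomb edge_cond_lincomb)

definition cnj_vec :: "complex ^ 'n \<Rightarrow> complex ^ 'n" where
  "cnj_vec x = (\<chi> i. cnj (x $ i))"

lemma cnj_vec_component [simp]: "cnj_vec x $ i = cnj (x $ i)"
  by (simp add: cnj_vec_def)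

lemma std_vertex_cond_cnj_vec:
  assumes "std_vertex_cond org trm x"
  shows "std_vertex_cond org trm (cnj_vec x)"
proof -
  have "(\<Sum>j | org j = v. cnj (x $ (j, cB))) + (\<Sum>j | trm j = v. cnj (x $ (j, cD)))
      = cnj ((\<Sum>j | org j = v. x $ (j, cB)) + (\<Sum>j | trm j = v. x $ (j, cD)))" for v
    by simp
  then show ?thesis
    using assms agree_at_vertices_combine[of org trm "\<lambda>j. x $ (j, cA)" "\<lambda>j. x $ (j, cC)"
        "\<lambda>j. x $ (j, cA)" "\<lambda>j. x $ (j, cC)" "\<lambda>u _. cnj u"]
    unfolding std_vertex_cond_iff by simp
qed

lemma edge_cond_cnj_vec:
  assumes "z \<in> torus" "edge_cond z x"
  shows "edge_cond z (cnj_vec x)"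
  unfolding edge_cond_def cnj_vec_component
proof (intro allI)
  fix j
  have unit: "z $ j * cnj (z $ j) = 1"
    using assms(1) by (simp add: torus_def complex_norm_square[symmetric])
  from assms(2)[unfolded edge_cond_def, THEN spec[of _ j]]
  have "cnj (x $ (j, cA) + \<i> * x $ (j, cB) - z $ j * (x $ (j, cC) - \<i> * x $ (j, cD))) = 0"
    "cnj (x $ (j, cC) + \<i> * x $ (j, cD) - z $ j * (x $ (j, cA) - \<i> * x $ (j, cB))) = 0"
    by simp_all
  then have "cnj (x $ (j, cA)) - \<i> * cnj (x $ (j, cB)) - cnj (z $ j) * (cnj (x $ (j, cC)) + \<i> * cnj (x $ (j, cD))) = 0"
    "cnj (x $ (j, cC)) - \<i> * cnj (x $ (j, cD)) - cnj (z $ j) * (cnj (x $ (j, cA)) + \<i> * cnj (x $ (j, cB))) = 0"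
    by simp_all
  with unit show "cnj (x $ (j, cA)) + \<i> * cnj (x $ (j, cB)) - z $ j * (cnj (x $ (j, cC)) - \<i> * cnj (x $ (j, cD))) = 0 \<and>
      cnj (x $ (j, cC)) + \<i> * cnj (x $ (j, cD)) - z $ j * (cnj (x $ (j, cA)) - \<i> * cnj (x $ (j, cB))) = 0"
    by (intro conjI; algebra)
qed

text \<open>Every x in S is re + i im with re = (x + cnj x)/2 and im = (x - cnj x)/(2i) real vectors of S.\<close>
lemma cnj_closed_subspace_real_basis:
  assumes S: "vec.subspace S" and cnj_closed: "\<And>x. x \<in> S \<Longrightarrow> cnj_vec x \<in> S"
  obtains Bs where "\<forall>b \<in> Bs. real_vec b" "vec.independent Bs" "vec.span Bs = S"
proof -
  define R where "R = {x \<in> S. real_vec x}"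
  obtain Bs where Bs: "Bs \<subseteq> R" "vec.independent Bs" "R \<subseteq> vec.span Bs"
    by (rule vec.maximal_independent_subset)
  have "S \<subseteq> vec.span Bs"
  proof
    fix x assume x: "x \<in> S"
    define re where "re = (1/2) *s x + (1/2) *s cnj_vec x"
    define im where "im = (- \<i>/2) *s x + (\<i>/2) *s cnj_vec x"
    have "re \<in> S" "im \<in> S"
      unfolding re_def im_def by (intro vec.subspace_add[OF S] vec.subspace_scale[OF S] x cnj_closed)+
    moreover have "re $ i = of_real (Re (x $ i))" "im $ i = of_real (Im (x $ i))" for i
      by (simp_all add: re_def im_def complex_eq_iff)
    then have "real_vec re" "real_vec im"
      by (simp_all add: real_vec_def)
    ultimately have "re \<in> vec.span Bs" "im \<in> vec.span Bs"
      using Bs(3) by (auto simp: R_def)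
    then have "re + \<i> *s im \<in> vec.span Bs"
      by (intro vec.span_add vec.span_scale)
    moreover have "x = re + \<i> *s im"
      by (simp add: vec_eq_iff re_def im_def complex_eq_iff)
    ultimately show "x \<in> vec.span Bs"
      by simp
  qed
  moreover have "vec.span Bs \<subseteq> S"
    using Bs(1) S by (intro vec.span_minimal) (auto simp: R_def)
  ultimately show ?thesis
    using that Bs(1,2) by (auto simp: R_def)
qed

lemma trace_space_fiber:
  assumes "z \<in> Sigma_set org trm"
  shows "z \<in> torus"
    and "{x. (z, x) \<in> trace_space org trm} = {x. std_vertex_cond org trm x \<and> edge_cond z x}"
proof -
  from assms obtain x where "(z, x) \<in> trace_space org trm"
    by (auto simp: Sigma_set_def)
  then show "z \<in> torus"
    by (subst (asm) trace_space_eq) simp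
  show "{x. (z, x) \<in> trace_space org trm} = {x. std_vertex_cond org trm x \<and> edge_cond z x}"
    using assms \<open>z \<in> torus\<close> by (subst trace_space_eq) auto
qed

theorem mainTheorem6:
  fixes org trm :: "'e::finite \<Rightarrow> 'v"
  shows "trace_space org trm =
           {(z, x). z \<in> torus \<and> std_vertex_cond org trm x \<and> edge_cond z x
                    \<and> (x \<noteq> 0 \<or> z \<in> Sigma_set org trm)}
       \<and> (\<forall>z \<in> Sigma_set org trm.
            vec.subspace {x. (z, x) \<in> trace_space org trm} \<and>
            (\<exists>Bs. (\<forall>b \<in> Bs. real_vec b) \<and> vec.independent Bs \<and>
                  vec.span Bs = {x. (z, x) \<in> trace_space org trm}))"
proof (rule conjI[OF trace_space_eq], intro ballI conjI)
  fix z assume z: "z \<in> Sigma_set org trm"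
  note fiber = trace_space_fiber[OF z]
  show subspace: "vec.subspace {x. (z, x) \<in> trace_space org trm}"
    unfolding fiber(2) by (rule subspace_std_vertex_cond_edge_cond)
  have "cnj_vec x \<in> {x. (z, x) \<in> trace_space org trm}" if "x \<in> {x. (z, x) \<in> trace_space org trm}" for x
    using that fiber by (simp add: std_vertex_cond_cnj_vec edge_cond_cnj_vec)
  with subspace show "\<exists>Bs. (\<forall>b \<in> Bs. real_vec b) \<and> vec.independent Bs \<and>
                  vec.span Bs = {x. (z, x) \<in> trace_space org trm}"
    by (metis cnj_closed_subspace_real_basis)
qed

end
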